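(* Let $X_1,\dots,X_n$ be i.i.d. with law $P_0$, and let $\{m_{\beta,\eta,\zeta}:\beta\in B,\eta\in\mathcal H_\eta,\zeta\in\Xi\}$ be measurable real functions, where $d$ is a metric on $\mathcal H_\eta$, $\beta_0\in\mathbb R^p$ and $\eta_0\in\mathcal H_\eta$. Suppose there are constants $C_1,C_2,C_3>0$ such that for all $\beta\in B,\eta\in\mathcal H_\eta,\zeta\in\Xi$, $$P_0(m_{\beta,\eta,\zeta}-m_{\beta,\eta_0,\zeta})\le-C_1d^2(\eta,\eta_0)+C_2\|\beta-\beta_0\|^2,$$ and for every $\delta>0$ and $n$, $$P_0^*\sup_{\beta\in B,\ \eta\in\mathcal H_\eta,\ \|\beta-\beta_0\|<\delta,\ d(\eta,\eta_0)<\delta,\ \zeta\in\Xi}\big|\mathbb G_n(m_{\beta,\eta,\zeta}-m_{\beta_0,\eta_0,\zeta})\big|\le C_3\phi_n(\delta),$$ for functions $\phi_n$ such that $\delta\mapsto\phi_n(\delta)/\delta^{a}$ is decreasing for some $a<2$. Let $\tilde\beta_n$ be a sequence of (random) elements and, for each $\zeta$, let $\hat\eta_{\tilde\beta_n}(\zeta)$ satisfy $\mathbb P_nm_{\tilde\beta_n,\hat\eta_{\tilde\beta_n}(\zeta),\zeta}\ge\mathbb P_nm_{\tilde\beta_n,\eta_0,\zeta}$ (e.g. a maximizer of $\eta\mapsto\mathbb P_nm_{\tilde\beta_n,\eta,\zeta}$), with $\Pr(\tilde\beta_n\in B,\ \hat\eta_{\tilde\beta_n}(\zeta)\in\mathcal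 H_\eta\ \forall\zeta\in\Xi)\to1$. Then for any sequence of positive numbers $r_n$ with $r_n^2\phi_n(1/r_n)\le\sqrt n$ for every $n$, $$\sup_{\zeta\in\Xi}r_n\,d(\hat\eta_{\tilde\beta_n}(\zeta),\eta_0)\le O^*_{P_0}\big(1+r_n\|\tilde\beta_n-\beta_0\|\big).$$
   Context: $\mathbb P_nf=n^{-1}\sum_if(X_i)$, $\mathbb G_nf=\sqrt n(\mathbb P_n-P_0)f$; $P_0^*$ denotes outer expectation and $O^*_{P_0}$ boundedness in outer probability. $\Xi$ is an arbitrary index set and $B\subset\mathbb R^p$. *)

theory Defs
  imports "HOL-Probability.Probability"
begin

definition emp_meas :: "(nat \<Rightarrow> 'w \<Rightarrow> 's) \<Rightarrow> nat \<Rightarrow> ('s \<Rightarrow> real) \<Rightarrow> 'w \<Rightarrow> real" where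
  "emp_meas X n f \<omega> = (\<Sum>i=1..n. f (X i \<omega>)) / real n"

definition emp_proc :: "'s measure \<Rightarrow> (nat \<Rightarrow> 'w \<Rightarrow> 's) \<Rightarrow> nat \<Rightarrow> ('s \<Rightarrow> real) \<Rightarrow> 'w \<Rightarrow> real" where
  "emp_proc P0 X n f \<omega> = sqrt (real n) * (emp_meas X n f \<omega> - (\<integral>x. f x \<partial>P0))"

definition outer_exp :: "'w measure \<Rightarrow> ('w \<Rightarrow> ennreal) \<Rightarrow> ennreal" where
  "outer_exp M f = (INF T \<in> {T \<in> borel_measurable M. \<forall>\<omega>\<in>space M. f \<omega> \<le> T \<omega>}. \<integral>\<^sup>+\<omega>. T \<omega> \<partial>M)"

definition outer_prob :: "'w measure \<Rightarrow> 'w set \<Rightarrow> real" where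
  "outer_prob M A = (INF B \<in> {B \<in> sets M. A \<inter> space M \<subseteq> B}. measure M B)"

end

theory Submission
  imports Defs
begin

(* Fix epsilon > 0.  Split the event "r n * d (eta_h, eta0) > K (1 + r n * |beta_t - beta0|)"
   into dyadic shells 2^(k-1) < r n * d (eta_h, eta0) <= 2^k with k > J.  On shell k,
   the basic inequality of M-estimation together with the curvature hypothesis
   forces the local modulus of the empirical process over the ball of radius
   2^(k+1) / r n to exceed a threshold of order sqrt n * 4^k / (r n)^2.  Markov's
   inequality for outer expectations, the modulus hypothesis, the growth bound
   on phi and the rate condition bound this by a geometric term of ratio
   2^a / 4 < 1.  Countable subadditivity of outer probability adds these up to
   a tail that is small for large J, plus the probability that the estimators
   leave the parameter sets, which vanishes. *)

lemma outer_prob_le_measure: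
  assumes "W \<in> sets M" and "A \<inter> space M \<subseteq> W"
  shows "outer_prob M A \<le> measure M W"
  unfolding outer_prob_def using assms
  by (intro cINF_lower) (auto intro!: bdd_belowI[of _ 0])

lemma outer_prob_nonneg: "0 \<le> outer_prob M A"
  unfolding outer_prob_def
  by (rule cINF_greatest) (auto intro: exI[of _ "space M"])

lemma outer_prob_less_cover:
  assumes "outer_prob M A < c"
  obtains W where "W \<in> sets M" "A \<inter> space M \<subseteq> W" "measure M W < c"
proof -
  have "measure M ` {W \<in> sets M. A \<inter> space M \<subseteq> W} \<noteq> {}" by auto
  from cInf_lessD[OF this assms[unfolded outer_prob_def]] show ?thesis
    using that by blast
qed

lemma outer_prob_cover_family:
  assumes "\<And>j. 0 < s j"
  obtains W where "\<And>j. W j \<in> sets M" "\<And>j. A j \<inter> space M \<subseteq> W j"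
    "\<And>j. measure M (W j) < outer_prob M (A j) + s j"
proof -
  have "\<exists>W. W \<in> sets M \<and> A j \<inter> space M \<subseteq> W \<and> measure M W < outer_prob M (A j) + s j" for j
    using assms[of j] by (metis outer_prob_less_cover less_add_same_cancel1)
  then show ?thesis using that by metis
qed

(* Countable subadditivity of outer probability: choose measurable covers
   whose measures exceed the outer probabilities by a summable slack. *)
lemma outer_prob_countable_subadditive:
  assumes "finite_measure M"
    and cover: "A \<inter> space M \<subseteq> G \<union> (\<Union>j. As j)"
    and summ: "summable (\<lambda>j. outer_prob M (As j))"
  shows "outer_prob M A \<le> outer_prob M G + (\<Sum>j. outer_prob M (As j))"
proof (rule field_le_epsilon)
  interpret finite_measure M by fact
  fix e :: real assume e: "0 < e"
  define slack where "slack j = e / 4 * (1/2) ^ j" for j :: nat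
  have slack_sums: "slack sums (e / 2)"
    using sums_mult[OF geometric_sums[of "1/2::real"], of "e / 4"] unfolding slack_def by simp
  obtain W0 where W0: "W0 \<in> sets M" "G \<inter> space M \<subseteq> W0" "measure M W0 < outer_prob M G + e / 2"
    using outer_prob_less_cover[of M G "outer_prob M G + e / 2"] e by auto
  have slack_pos: "0 < slack j" for j using e unfolding slack_def by simp
  obtain W where W: "\<And>j. W j \<in> sets M" "\<And>j. As j \<inter> space M \<subseteq> W j"
      "\<And>j. measure M (W j) < outer_prob M (As j) + slack j"
    using outer_prob_cover_family[where s = slack and M = M and A = As, OF slack_pos] by blast
  have bound_summable: "summable (\<lambda>j. outer_prob M (As j) + slack j)"
    using summ sums_summable[OF slack_sums] by (rule summable_add)
  have W_summable: "summable (\<lambda>j. measure M (W j))"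
  proof (rule summable_comparison_test'[OF bound_summable])
    show "norm (measure M (W j)) \<le> outer_prob M (As j) + slack j" for j
      using W(3)[of j] by simp
  qed
  have "outer_prob M A \<le> measure M (W0 \<union> (\<Union>j. W j))"
  proof (rule outer_prob_le_measure)
    show "W0 \<union> (\<Union>j. W j) \<in> sets M" using W0 W by auto
    show "A \<inter> space M \<subseteq> W0 \<union> (\<Union>j. W j)"
    proof
      fix x assume x: "x \<in> A \<inter> space M"
      then consider "x \<in> G" | j where "x \<in> As j" using cover by blast
      then show "x \<in> W0 \<union> (\<Union>j. W j)"
        using x W0(2) W(2) by cases blast+
    qed
  qed
  also have "\<dots> \<le> measure M W0 + measure M (\<Union>j. W j)"
    using W0 W by (intro measure_Un_le) auto
  also have "measure M (\<Union>j. W j) \<le> (\<Sum>j. measure M (W j))"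
    using W W_summable by (intro finite_measure_subadditive_countably) auto
  also have "\<dots> \<le> (\<Sum>j. outer_prob M (As j) + slack j)"
    using W(3) W_summable bound_summable by (intro suminf_le) (auto intro: less_imp_le)
  also have "\<dots> = (\<Sum>j. outer_prob M (As j)) + e / 2"
    using suminf_add[OF summ sums_summable[OF slack_sums]] slack_sums by (simp add: sums_iff)
  finally show "outer_prob M A \<le> outer_prob M G + (\<Sum>j. outer_prob M (As j)) + e"
    using W0 by linarith
qed

lemma markov_measure:
  assumes "finite_measure M" and T: "T \<in> borel_measurable M" and t: "t > 0"
    and I: "(\<integral>\<^sup>+\<omega>. T \<omega> \<partial>M) \<le> ennreal c" and c: "0 \<le> c"
  shows "measure M {\<omega>\<in>space M. ennreal t \<le> T \<omega>} \<le> c / t"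
proof -
  interpret finite_measure M by fact
  let ?A = "{\<omega>\<in>space M. ennreal t \<le> T \<omega>}"
  have A: "?A \<in> sets M" using T by measurable
  have "ennreal (t * measure M ?A) = (\<integral>\<^sup>+\<omega>. ennreal t * indicator ?A \<omega> \<partial>M)"
    using A t by (simp add: nn_integral_cmult_indicator emeasure_eq_measure ennreal_mult)
  also have "\<dots> \<le> (\<integral>\<^sup>+\<omega>. T \<omega> \<partial>M)"
    by (intro nn_integral_mono) (auto split: split_indicator)
  finally have "t * measure M ?A \<le> c"
    using I c by (metis order.trans ennreal_le_iff)
  thus ?thesis using t by (simp add: pos_le_divide_eq mult.commute)
qed

(* Markov's inequality for outer expectations: apply the measurable version to
   nearly optimal measurable majorants of S. *)
lemma outer_prob_markov:
  assumes "finite_measure M" and t: "t > 0" and c: "0 \<le> c"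
    and S: "outer_exp M S \<le> ennreal c"
  shows "outer_prob M {\<omega>\<in>space M. ennreal t \<le> S \<omega>} \<le> c / t"
proof (rule field_le_epsilon)
  fix e :: real assume e: "0 < e"
  have "outer_exp M S < ennreal (c + e * t)"
    using S c e t by (auto intro: order.strict_trans1 simp: ennreal_less_iff)
  then obtain T where T: "T \<in> borel_measurable M" "\<And>\<omega>. \<omega> \<in> space M \<Longrightarrow> S \<omega> \<le> T \<omega>"
      and I: "(\<integral>\<^sup>+\<omega>. T \<omega> \<partial>M) < ennreal (c + e * t)"
    unfolding outer_exp_def INF_less_iff by blast
  have "outer_prob M {\<omega>\<in>space M. ennreal t \<le> S \<omega>} \<le> measure M {\<omega>\<in>space M. ennreal t \<le> T \<omega>}"
    using T by (intro outer_prob_le_measure) (auto intro: order.trans, measurable)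
  also have "\<dots> \<le> (c + e * t) / t"
    using assms(1) T(1) t I c e by (intro markov_measure) auto
  also have "\<dots> = c / t + e" using t by (simp add: field_simps)
  finally show "outer_prob M {\<omega>\<in>space M. ennreal t \<le> S \<omega>} \<le> c / t + e" .
qed

lemma enn2ereal_le_ereal:
  assumes "enn2ereal x \<le> ereal c"
  shows "x \<le> ennreal c" "0 \<le> c"
proof -
  show c: "0 \<le> c" using order_trans[OF enn2ereal_nonneg assms] by simp
  have "x = e2ennreal (enn2ereal x)" by simp
  also have "\<dots> \<le> e2ennreal (ereal c)" by (rule e2ennreal_mono[OF assms])
  finally show "x \<le> ennreal c" by simp
qed

lemma emp_meas_diff:
  "emp_meas X n (\<lambda>x. f x - g x) \<omega> = emp_meas X n f \<omega> - emp_meas X n g \<omega>"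
  unfolding emp_meas_def by (simp add: sum_subtractf diff_divide_distrib)

lemma basic_inequality:
  assumes int_f: "integrable P0 (\<lambda>x. f x - h x)" and int_g: "integrable P0 (\<lambda>x. g x - h x)"
    and ge: "emp_meas X n g \<omega> \<le> emp_meas X n f \<omega>"
  shows "- sqrt n * (\<integral>x. (f x - g x) \<partial>P0)
    \<le> \<bar>emp_proc P0 X n (\<lambda>x. f x - h x) \<omega>\<bar> + \<bar>emp_proc P0 X n (\<lambda>x. g x - h x) \<omega>\<bar>"
proof -
  have "emp_proc P0 X n (\<lambda>x. f x - h x) \<omega> - emp_proc P0 X n (\<lambda>x. g x - h x) \<omega>
      = sqrt n * (emp_meas X n f \<omega> - emp_meas X n g \<omega>)
        - sqrt n * ((\<integral>x. (f x - h x) \<partial>P0) - (\<integral>x. (g x - h x) \<partial>P0))"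
    unfolding emp_proc_def emp_meas_diff by (simp add: algebra_simps)
  also have "(\<integral>x. (f x - h x) \<partial>P0) - (\<integral>x. (g x - h x) \<partial>P0) = (\<integral>x. (f x - g x) \<partial>P0)"
    using int_f int_g by (subst Bochner_Integration.integral_diff[symmetric]) auto
  finally have "emp_proc P0 X n (\<lambda>x. f x - h x) \<omega> - emp_proc P0 X n (\<lambda>x. g x - h x) \<omega>
      = sqrt n * (emp_meas X n f \<omega> - emp_meas X n g \<omega>) - sqrt n * (\<integral>x. (f x - g x) \<partial>P0)" .
  moreover have "0 \<le> sqrt n * (emp_meas X n f \<omega> - emp_meas X n g \<omega>)"
    using ge by simp
  ultimately show ?thesis by linarith
qed

lemma ratio_decreasing_growth:
  fixes f :: "real \<Rightarrow> real"
  assumes dec: "f \<delta>2 / \<delta>2 powr a \<le> f \<delta>1 / \<delta>1 powr a" and "0 < \<delta>1" "\<delta>1 \<le> \<delta>2"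
  shows "f \<delta>2 \<le> (\<delta>2 / \<delta>1) powr a * f \<delta>1"
proof -
  have "0 < \<delta>2" using assms by linarith
  then have "f \<delta>2 \<le> f \<delta>1 / \<delta>1 powr a * \<delta>2 powr a"
    using dec by (simp add: pos_divide_le_eq)
  also have "\<dots> = (\<delta>2 / \<delta>1) powr a * f \<delta>1"
    using \<open>0 < \<delta>1\<close> \<open>0 < \<delta>2\<close> by (simp add: powr_divide)
  finally show ?thesis .
qed

lemma dyadic_shell:
  fixes u :: real assumes "2 ^ J < u"
  obtains k where "J < k" "u \<le> 2 ^ k" "2 ^ (k - 1) < u"
proof -
  obtain N where N: "u < 2 ^ N" using real_arch_pow[of 2 u] by auto
  define k where "k = (LEAST k. u \<le> 2 ^ k)"
  have upper: "u \<le> 2 ^ k" unfolding k_def by (rule LeastI[of _ N]) (use N in auto)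
  have below: "\<not> u \<le> 2 ^ i" if "i < k" for i unfolding k_def by (rule not_less_Least[OF that[unfolded k_def]])
  have "J < k"
  proof (rule ccontr)
    assume "\<not> J < k"
    then have "(2::real) ^ k \<le> 2 ^ J" by (intro power_increasing) auto
    then show False using upper assms by linarith
  qed
  moreover have "2 ^ (k - 1) < u" using below[of "k - 1"] \<open>J < k\<close> by auto
  ultimately show ?thesis using upper that by blast
qed

lemma curvature_dominates:
  fixes r K C1 C2 b D :: real
  assumes r: "0 < r" and K: "1 \<le> K" "2 * C2 \<le> K\<^sup>2 * C1" and C1: "0 < C1" and b: "0 \<le> b"
    and excess: "K * (1 + r * b) < r * D"
  shows "b < D" "C1 * D\<^sup>2 / 2 \<le> C1 * D\<^sup>2 - C2 * b\<^sup>2"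
proof -
  have "r * (K * b) \<le> K * (1 + r * b)" using K b r by (simp add: algebra_simps)
  then have "r * (K * b) < r * D" using excess by linarith
  then have Kb: "K * b < D" using r by simp
  moreover have "b \<le> K * b" using K b by (simp add: mult_right_mono[of 1 K b, simplified])
  ultimately show "b < D" by linarith
  have "(K * b)\<^sup>2 \<le> D\<^sup>2" using Kb K b by (intro power_mono) auto
  then have "C1 * (K * b)\<^sup>2 \<le> C1 * D\<^sup>2" using C1 by simp
  moreover have "2 * C2 * b\<^sup>2 \<le> K\<^sup>2 * C1 * b\<^sup>2" using K by (simp add: mult_right_mono)
  ultimately have "2 * C2 * b\<^sup>2 \<le> C1 * D\<^sup>2" by (simp add: power_mult_distrib algebra_simps)
  then show "C1 * D\<^sup>2 / 2 \<le> C1 * D\<^sup>2 - C2 * b\<^sup>2" by simp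
qed

lemma dyadic_square_bound:
  fixes r D :: real
  assumes r: "0 < r" and k: "1 \<le> k" and below: "2 ^ (k - 1) < r * D"
  shows "(2 ^ k / r)\<^sup>2 / 16 < D\<^sup>2 / 4"
proof -
  have "(2::real) ^ k = 2 * 2 ^ (k - 1)" using k by (simp flip: power_Suc)
  then have "2 ^ k / r < 2 * D" using below r by (simp add: divide_less_eq mult.commute)
  then have "(2 ^ k / r)\<^sup>2 < (2 * D)\<^sup>2" using r by (intro power_strict_mono) auto
  then show ?thesis by (simp add: power_mult_distrib)
qed

lemma geometric_tail_sums:
  fixes q A :: real assumes "norm q < 1"
  shows "(\<lambda>j. A * q ^ (j + J)) sums (A * q ^ J / (1 - q))"
  using sums_mult[OF geometric_sums[OF assms], of "A * q ^ J"]
  by (simp add: power_add algebra_simps)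

(* The hypotheses of the theorem that the peeling argument actually uses; the
   parameter a < 2 is fixed.  The i.i.d. structure of X enters only through
   the modulus hypothesis. *)
locale peeling_setting =
  fixes M :: "'w measure" and P0 :: "'s measure" and X :: "nat \<Rightarrow> 'w \<Rightarrow> 's"
    and m :: "'b::real_normed_vector \<Rightarrow> 'h \<Rightarrow> 'z \<Rightarrow> 's \<Rightarrow> real"
    and B :: "'b set" and H :: "'h set" and \<Xi> :: "'z set"
    and d :: "'h \<Rightarrow> 'h \<Rightarrow> real" and \<beta>0 :: 'b and \<eta>0 :: 'h
    and C1 C2 C3 :: real and \<phi> :: "nat \<Rightarrow> real \<Rightarrow> real" and a :: real
    and \<beta>t :: "nat \<Rightarrow> 'w \<Rightarrow> 'b" and \<eta>h :: "nat \<Rightarrow> 'z \<Rightarrow> 'w \<Rightarrow> 'h" and r :: "nat \<Rightarrow> real"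
  assumes prob: "prob_space M"
    and metric: "Metric_space H d"
    and \<eta>0: "\<eta>0 \<in> H"
    and m_int: "\<And>\<beta> \<eta> \<zeta>. \<beta> \<in> B \<Longrightarrow> \<eta> \<in> H \<Longrightarrow> \<zeta> \<in> \<Xi> \<Longrightarrow>
        integrable P0 (\<lambda>x. m \<beta> \<eta> \<zeta> x - m \<beta>0 \<eta>0 \<zeta> x)"
    and C_pos: "C1 > 0" "C2 > 0" "C3 > 0"
    and curv: "\<And>\<beta> \<eta> \<zeta>. \<beta> \<in> B \<Longrightarrow> \<eta> \<in> H \<Longrightarrow> \<zeta> \<in> \<Xi> \<Longrightarrow>
        (\<integral>x. (m \<beta> \<eta> \<zeta> x - m \<beta> \<eta>0 \<zeta> x) \<partial>P0) \<le> - C1 * (d \<eta> \<eta>0)\<^sup>2 + C2 * (norm (\<beta> - \<beta>0))\<^sup>2"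
    and modulus: "\<And>\<delta> n. \<delta> > 0 \<Longrightarrow> n \<ge> 1 \<Longrightarrow>
        enn2ereal (outer_exp M (\<lambda>\<omega>. SUP (\<beta>, \<eta>, \<zeta>) \<in> {(\<beta>, \<eta>, \<zeta>). \<beta> \<in> B \<and> \<eta> \<in> H \<and>
              norm (\<beta> - \<beta>0) < \<delta> \<and> d \<eta> \<eta>0 < \<delta> \<and> \<zeta> \<in> \<Xi>}.
            ennreal \<bar>emp_proc P0 X n (\<lambda>x. m \<beta> \<eta> \<zeta> x - m \<beta>0 \<eta>0 \<zeta> x) \<omega>\<bar>))
        \<le> ereal (C3 * \<phi> n \<delta>)"
    and a_less_2: "a < 2"
    and \<phi>_decr: "\<And>n \<delta>1 \<delta>2. n \<ge> 1 \<Longrightarrow> 0 < \<delta>1 \<Longrightarrow> \<delta>1 \<le> \<delta>2 \<Longrightarrow>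
        \<phi> n \<delta>2 / \<delta>2 powr a \<le> \<phi> n \<delta>1 / \<delta>1 powr a"
    and \<eta>h_ge: "\<And>n \<zeta> \<omega>. n \<ge> 1 \<Longrightarrow> \<zeta> \<in> \<Xi> \<Longrightarrow> \<omega> \<in> space M \<Longrightarrow>
        emp_meas X n (m (\<beta>t n \<omega>) (\<eta>h n \<zeta> \<omega>) \<zeta>) \<omega> \<ge> emp_meas X n (m (\<beta>t n \<omega>) \<eta>0 \<zeta>) \<omega>"
    and r_pos: "\<And>n. r n > 0"
    and r_rate: "\<And>n. n \<ge> 1 \<Longrightarrow> (r n)\<^sup>2 * \<phi> n (1 / r n) \<le> sqrt (real n)"
begin

definition modulus_sup :: "nat \<Rightarrow> real \<Rightarrow> 'w \<Rightarrow> ennreal" where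
  "modulus_sup n \<delta> \<omega> = (SUP (\<beta>, \<eta>, \<zeta>) \<in> {(\<beta>, \<eta>, \<zeta>). \<beta> \<in> B \<and> \<eta> \<in> H \<and>
     norm (\<beta> - \<beta>0) < \<delta> \<and> d \<eta> \<eta>0 < \<delta> \<and> \<zeta> \<in> \<Xi>}.
     ennreal \<bar>emp_proc P0 X n (\<lambda>x. m \<beta> \<eta> \<zeta> x - m \<beta>0 \<eta>0 \<zeta> x) \<omega>\<bar>)"

(* The k-th shell {2^(k-1) < r n * d eta eta0 <= 2^k} is contained in the ball
   of radius shell_radius n k; shell_level n k is the size the local modulus
   must reach for the estimator to lie in that shell. *)
definition shell_radius :: "nat \<Rightarrow> nat \<Rightarrow> real" where
  "shell_radius n k = 2 ^ Suc k / r n"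

definition shell_level :: "nat \<Rightarrow> nat \<Rightarrow> real" where
  "shell_level n k = sqrt n * C1 * (2 ^ k / r n)\<^sup>2 / 16"

definition shell_event :: "nat \<Rightarrow> nat \<Rightarrow> 'w set" where
  "shell_event n k = {\<omega> \<in> space M. ennreal (shell_level n k) \<le> modulus_sup n (shell_radius n k) \<omega>}"

definition escape_event :: "nat \<Rightarrow> 'w set" where
  "escape_event n = {\<omega> \<in> space M. \<not> (\<beta>t n \<omega> \<in> B \<and> (\<forall>\<zeta>\<in>\<Xi>. \<eta>h n \<zeta> \<omega> \<in> H))}"

definition excess_event :: "nat \<Rightarrow> real \<Rightarrow> 'w set" where
  "excess_event n K = {\<omega> \<in> space M.
     (SUP \<zeta> \<in> \<Xi>. ereal (r n * d (\<eta>h n \<zeta> \<omega>) \<eta>0)) > ereal (K * (1 + r n * norm (\<beta>t n \<omega> - \<beta>0)))}"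

definition shell_const :: real where
  "shell_const = 16 * C3 * 2 powr a / C1"

definition shell_ratio :: real where
  "shell_ratio = 2 powr a / 4"

lemma shell_ratio_bounds: "0 < shell_ratio" "shell_ratio < 1"
proof -
  have "2 powr a < (2::real) powr 2" using a_less_2 by (intro powr_less_mono) auto
  then show "shell_ratio < 1" unfolding shell_ratio_def by (simp add: powr_numeral)
qed (simp add: shell_ratio_def)

lemma modulus_sup_ge:
  assumes "\<beta> \<in> B" "\<eta> \<in> H" "\<zeta> \<in> \<Xi>" "norm (\<beta> - \<beta>0) < \<delta>" "d \<eta> \<eta>0 < \<delta>"
  shows "ennreal \<bar>emp_proc P0 X n (\<lambda>x. m \<beta> \<eta> \<zeta> x - m \<beta>0 \<eta>0 \<zeta> x) \<omega>\<bar> \<le> modulus_sup n \<delta> \<omega>"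
  unfolding modulus_sup_def using assms by (intro SUP_upper2[of "(\<beta>, \<eta>, \<zeta>)"]) auto

lemma phi_shell_bound:
  assumes "n \<ge> 1"
  shows "\<phi> n (shell_radius n k) \<le> (2 powr a) ^ Suc k * sqrt n / (r n)\<^sup>2"
proof -
  have r: "0 < r n" by (rule r_pos)
  have "(1::real) \<le> 2 ^ Suc k" by (rule one_le_power) simp
  then have "1 / r n \<le> shell_radius n k"
    unfolding shell_radius_def using r by (intro divide_right_mono) auto
  then have "\<phi> n (shell_radius n k) \<le> (shell_radius n k / (1 / r n)) powr a * \<phi> n (1 / r n)"
    using r by (intro ratio_decreasing_growth \<phi>_decr assms) auto
  also have "shell_radius n k / (1 / r n) = 2 powr real (Suc k)"
    unfolding shell_radius_def using r by (simp only: powr_realpow) simp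
  also have "(2 powr real (Suc k)) powr a = (2 powr a) ^ Suc k"
    by (simp only: powr_powr powr_power mult.commute)
  also have "\<phi> n (1 / r n) \<le> sqrt n / (r n)\<^sup>2"
    using r_rate[OF assms] r by (simp add: pos_le_divide_eq mult.commute)
  finally show ?thesis by (simp add: mult_left_mono)
qed

lemma shell_level_pos: "n \<ge> 1 \<Longrightarrow> 0 < shell_level n k"
  unfolding shell_level_def using r_pos[of n] C_pos by simp

lemma shell_level_eq: "shell_level n k = sqrt n * C1 * 4 ^ k / (16 * (r n)\<^sup>2)"
proof -
  have "((2::real) ^ k)\<^sup>2 = (2\<^sup>2) ^ k"
    by (simp only: power_mult[symmetric] mult.commute)
  then show ?thesis unfolding shell_level_def by (simp add: power_divide)
qed

lemma shell_event_prob: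
  assumes n: "n \<ge> 1"
  shows "outer_prob M (shell_event n k) \<le> shell_const * shell_ratio ^ k"
proof -
  have r: "0 < r n" by (rule r_pos)
  have "0 < shell_radius n k" unfolding shell_radius_def using r by simp
  from enn2ereal_le_ereal[OF modulus[OF this n, folded modulus_sup_def]]
  have modulus_le: "outer_exp M (modulus_sup n (shell_radius n k)) \<le> ennreal (C3 * \<phi> n (shell_radius n k))"
    and modulus_nonneg: "0 \<le> C3 * \<phi> n (shell_radius n k)" .
  have "outer_prob M (shell_event n k) \<le> C3 * \<phi> n (shell_radius n k) / shell_level n k"
    unfolding shell_event_def
    using prob_space.finite_measure[OF prob] shell_level_pos[OF n] modulus_nonneg modulus_le
    by (rule outer_prob_markov)
  also have "\<dots> \<le> C3 * ((2 powr a) ^ Suc k * sqrt n / (r n)\<^sup>2) / shell_level n k"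
    using phi_shell_bound[OF n] C_pos shell_level_pos[OF n, THEN less_imp_le]
    by (intro divide_right_mono mult_left_mono) auto
  also have "\<dots> = shell_const * shell_ratio ^ k"
    unfolding shell_level_eq shell_const_def shell_ratio_def
    using r n C_pos by (simp add: field_simps power_divide)
  finally show ?thesis .
qed

lemma local_basic_inequality:
  assumes "\<beta> \<in> B" "\<eta> \<in> H" "\<zeta> \<in> \<Xi>"
    and ge: "emp_meas X n (m \<beta> \<eta>0 \<zeta>) \<omega> \<le> emp_meas X n (m \<beta> \<eta> \<zeta>) \<omega>"
  shows "sqrt n * (C1 * (d \<eta> \<eta>0)\<^sup>2 - C2 * (norm (\<beta> - \<beta>0))\<^sup>2)
    \<le> \<bar>emp_proc P0 X n (\<lambda>x. m \<beta> \<eta> \<zeta> x - m \<beta>0 \<eta>0 \<zeta> x) \<omega>\<bar>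
      + \<bar>emp_proc P0 X n (\<lambda>x. m \<beta> \<eta>0 \<zeta> x - m \<beta>0 \<eta>0 \<zeta> x) \<omega>\<bar>"
proof -
  have excess_curv: "C1 * (d \<eta> \<eta>0)\<^sup>2 - C2 * (norm (\<beta> - \<beta>0))\<^sup>2
      \<le> - (\<integral>x. (m \<beta> \<eta> \<zeta> x - m \<beta> \<eta>0 \<zeta> x) \<partial>P0)"
    using curv[OF assms(1-3)] by linarith
  have "sqrt n * (C1 * (d \<eta> \<eta>0)\<^sup>2 - C2 * (norm (\<beta> - \<beta>0))\<^sup>2)
      \<le> - sqrt n * (\<integral>x. (m \<beta> \<eta> \<zeta> x - m \<beta> \<eta>0 \<zeta> x) \<partial>P0)"
    using mult_left_mono[OF excess_curv, of "sqrt n"] by simp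
  also have "\<dots> \<le> \<bar>emp_proc P0 X n (\<lambda>x. m \<beta> \<eta> \<zeta> x - m \<beta>0 \<eta>0 \<zeta> x) \<omega>\<bar>
      + \<bar>emp_proc P0 X n (\<lambda>x. m \<beta> \<eta>0 \<zeta> x - m \<beta>0 \<eta>0 \<zeta> x) \<omega>\<bar>"
    using assms \<eta>0 by (intro basic_inequality m_int)
  finally show ?thesis .
qed

lemma shell_level_reached:
  assumes n: "n \<ge> 1" and \<beta>: "\<beta> \<in> B" and \<eta>: "\<eta> \<in> H" and \<zeta>: "\<zeta> \<in> \<Xi>"
    and ge: "emp_meas X n (m \<beta> \<eta>0 \<zeta>) \<omega> \<le> emp_meas X n (m \<beta> \<eta> \<zeta>) \<omega>"
    and dominate: "C1 * (d \<eta> \<eta>0)\<^sup>2 / 2 \<le> C1 * (d \<eta> \<eta>0)\<^sup>2 - C2 * (norm (\<beta> - \<beta>0))\<^sup>2"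
    and close: "norm (\<beta> - \<beta>0) < d \<eta> \<eta>0"
    and k: "1 \<le> k" "r n * d \<eta> \<eta>0 \<le> 2 ^ k" "2 ^ (k - 1) < r n * d \<eta> \<eta>0"
  shows "ennreal (shell_level n k) \<le> modulus_sup n (shell_radius n k) \<omega>"
proof -
  define D where "D = d \<eta> \<eta>0"
  define b where "b = norm (\<beta> - \<beta>0)"
  define g1 where "g1 = \<bar>emp_proc P0 X n (\<lambda>x. m \<beta> \<eta> \<zeta> x - m \<beta>0 \<eta>0 \<zeta> x) \<omega>\<bar>"
  define g2 where "g2 = \<bar>emp_proc P0 X n (\<lambda>x. m \<beta> \<eta>0 \<zeta> x - m \<beta>0 \<eta>0 \<zeta> x) \<omega>\<bar>"
  have r: "0 < r n" by (rule r_pos)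
  have "D \<le> 2 ^ k / r n" using k(2) r unfolding D_def by (simp add: pos_le_divide_eq mult.commute)
  also have "\<dots> < shell_radius n k" unfolding shell_radius_def using r by (simp add: divide_strict_right_mono)
  finally have radius: "D < shell_radius n k" .
  have "shell_level n k < sqrt n * C1 * (D\<^sup>2 / 4)"
    using dyadic_square_bound[OF r k(1) k(3)[folded D_def]] n C_pos
    unfolding shell_level_def by (simp add: mult_strict_left_mono)
  also have "\<dots> \<le> sqrt n * (C1 * D\<^sup>2 - C2 * b\<^sup>2) / 2"
  proof -
    have "sqrt n * (C1 * D\<^sup>2 / 2) \<le> sqrt n * (C1 * D\<^sup>2 - C2 * b\<^sup>2)"
      using dominate unfolding D_def b_def by (intro mult_left_mono) simp_all
    moreover have "sqrt n * C1 * (D\<^sup>2 / 4) = sqrt n * (C1 * D\<^sup>2 / 2) / 2" by simp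
    ultimately show ?thesis by linarith
  qed
  also have "\<dots> \<le> (g1 + g2) / 2"
    using local_basic_inequality[OF \<beta> \<eta> \<zeta> ge] unfolding D_def b_def g1_def g2_def by simp
  finally have "ennreal (shell_level n k) \<le> ennreal (max g1 g2)"
    by (intro ennreal_leI) (simp add: max_def)
  also have "\<dots> \<le> modulus_sup n (shell_radius n k) \<omega>"
    using \<beta> \<eta> \<eta>0 \<zeta> radius close Metric_space.zero[OF metric, of \<eta>0 \<eta>0]
      Metric_space.nonneg[OF metric, of \<eta> \<eta>0]
    unfolding D_def b_def g1_def g2_def max_def
    by (auto intro!: modulus_sup_ge)
  finally show ?thesis .
qed

lemma excess_within_shells:
  assumes n: "n \<ge> 1" and K: "2 ^ J \<le> K" "2 * C2 \<le> K\<^sup>2 * C1"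
  shows "excess_event n K \<inter> space M \<subseteq> escape_event n \<union> (\<Union>j. shell_event n (j + Suc J))"
proof
  fix \<omega> assume \<omega>: "\<omega> \<in> excess_event n K \<inter> space M"
  show "\<omega> \<in> escape_event n \<union> (\<Union>j. shell_event n (j + Suc J))"
  proof (cases "\<omega> \<in> escape_event n")
    case False
    define \<beta> where "\<beta> = \<beta>t n \<omega>"
    from \<omega> obtain \<zeta> where \<zeta>: "\<zeta> \<in> \<Xi>"
      and excess: "K * (1 + r n * norm (\<beta> - \<beta>0)) < r n * d (\<eta>h n \<zeta> \<omega>) \<eta>0"
      unfolding excess_event_def less_SUP_iff \<beta>_def by auto
    define \<eta> where "\<eta> = \<eta>h n \<zeta> \<omega>"
    have \<beta>: "\<beta> \<in> B" and \<eta>: "\<eta> \<in> H"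
      using False \<omega> \<zeta> unfolding escape_event_def \<beta>_def \<eta>_def by auto
    have r: "0 < r n" by (rule r_pos)
    have K1: "1 \<le> K" using K(1) one_le_power[of "2::real" J] by linarith
    note dominate = curvature_dominates[OF r K1 K(2) C_pos(1) norm_ge_zero excess[folded \<eta>_def]]
    have "K \<le> K * (1 + r n * norm (\<beta> - \<beta>0))" using K1 r by simp
    then obtain k where k: "J < k" "r n * d \<eta> \<eta>0 \<le> 2 ^ k" "2 ^ (k - 1) < r n * d \<eta> \<eta>0"
      using dyadic_shell[of J "r n * d \<eta> \<eta>0"] K(1) excess[folded \<eta>_def] by force
    have "ennreal (shell_level n k) \<le> modulus_sup n (shell_radius n k) \<omega>"
      using shell_level_reached[OF n \<beta> \<eta> \<zeta> _ dominate(2) dominate(1)] k \<eta>h_ge[OF n \<zeta>] \<omega>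
      unfolding \<beta>_def \<eta>_def by simp
    then have "\<omega> \<in> shell_event n (k - Suc J + Suc J)"
      using \<omega> k(1) unfolding shell_event_def by simp
    then show ?thesis by blast
  qed simp
qed

lemma excess_prob_bound:
  assumes n: "n \<ge> 1" and K: "2 ^ J \<le> K" "2 * C2 \<le> K\<^sup>2 * C1"
  shows "outer_prob M (excess_event n K)
    \<le> outer_prob M (escape_event n) + shell_const * shell_ratio ^ Suc J / (1 - shell_ratio)"
proof -
  have tail: "(\<lambda>j. shell_const * shell_ratio ^ (j + Suc J))
      sums (shell_const * shell_ratio ^ Suc J / (1 - shell_ratio))"
    using shell_ratio_bounds by (intro geometric_tail_sums) auto
  have shell_bound: "norm (outer_prob M (shell_event n (j + Suc J))) \<le> shell_const * shell_ratio ^ (j + Suc J)" for j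
    using shell_event_prob[OF n, of "j + Suc J"] outer_prob_nonneg[of M] by simp
  have summ: "summable (\<lambda>j. outer_prob M (shell_event n (j + Suc J)))"
    using shell_bound by (rule summable_comparison_test'[OF sums_summable[OF tail]])
  have "outer_prob M (excess_event n K)
      \<le> outer_prob M (escape_event n) + (\<Sum>j. outer_prob M (shell_event n (j + Suc J)))"
    using prob_space.finite_measure[OF prob] excess_within_shells[OF n K] summ
    by (rule outer_prob_countable_subadditive)
  also have "(\<Sum>j. outer_prob M (shell_event n (j + Suc J))) \<le> shell_const * shell_ratio ^ Suc J / (1 - shell_ratio)"
    using shell_bound by (intro sums_le[OF _ summable_sums[OF summ] tail]) (simp add: abs_le_iff)
  finally show ?thesis by simp
qed

(* The rate statement within the setting: choose J so that the geometric tail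
   is below epsilon / 2 and the matching constant K. *)
lemma rate_bound:
  assumes escape: "(\<lambda>n. outer_prob M (escape_event n)) \<longlonglongrightarrow> 0"
  shows "\<forall>\<epsilon> > 0. \<exists>K. \<forall>\<^sub>F n in sequentially. outer_prob M (excess_event n K) \<le> \<epsilon>"
proof (intro allI impI)
  fix \<epsilon> :: real assume \<epsilon>: "\<epsilon> > 0"
  have "(\<lambda>J. shell_ratio ^ Suc J) \<longlonglongrightarrow> 0"
    using shell_ratio_bounds by (intro LIMSEQ_Suc LIMSEQ_power_zero) auto
  then have "(\<lambda>J. shell_const * shell_ratio ^ Suc J / (1 - shell_ratio)) \<longlonglongrightarrow> shell_const * 0 / (1 - shell_ratio)"
    using shell_ratio_bounds by (intro tendsto_intros) auto
  then obtain J where J: "shell_const * shell_ratio ^ Suc J / (1 - shell_ratio) < \<epsilon> / 2"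
  proof -
    have "\<forall>\<^sub>F J in sequentially. shell_const * shell_ratio ^ Suc J / (1 - shell_ratio) < \<epsilon> / 2"
      using \<epsilon> \<open>_ \<longlonglongrightarrow> shell_const * 0 / (1 - shell_ratio)\<close> by (intro order_tendstoD(2)) auto
    then show ?thesis using that by (auto simp: eventually_sequentially)
  qed
  define K where "K = 2 ^ J + sqrt (2 * C2 / C1)"
  have K_pow: "2 ^ J \<le> K" unfolding K_def using C_pos by simp
  have "2 * C2 / C1 = (sqrt (2 * C2 / C1))\<^sup>2" using C_pos by simp
  also have "\<dots> \<le> K\<^sup>2" unfolding K_def using C_pos by (intro power_mono) auto
  finally have K_curv: "2 * C2 \<le> K\<^sup>2 * C1" using C_pos by (simp add: pos_divide_le_eq)
  have "\<forall>\<^sub>F n in sequentially. outer_prob M (escape_event n) < \<epsilon> / 2"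
    using escape \<epsilon> by (intro order_tendstoD(2)) auto
  moreover have "\<forall>\<^sub>F n in sequentially. n \<ge> 1" by (rule eventually_ge_at_top)
  ultimately have "\<forall>\<^sub>F n in sequentially. outer_prob M (excess_event n K) \<le> \<epsilon>"
  proof eventually_elim
    case (elim n)
    then show ?case using excess_prob_bound[OF elim(2) K_pow K_curv] J by linarith
  qed
  then show "\<exists>K. \<forall>\<^sub>F n in sequentially. outer_prob M (excess_event n K) \<le> \<epsilon>" ..
qed

end

theorem lemma4:
  fixes M :: "'w measure" and P0 :: "'s measure"
    and X :: "nat \<Rightarrow> 'w \<Rightarrow> 's"
    and m :: "real^'p \<Rightarrow> 'h \<Rightarrow> 'z \<Rightarrow> 's \<Rightarrow> real"
    and B :: "(real^'p) set" and H :: "'h set" and \<Xi> :: "'z set"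
    and d :: "'h \<Rightarrow> 'h \<Rightarrow> real"
    and \<beta>0 :: "real^'p" and \<eta>0 :: "'h"
    and C1 C2 C3 :: real
    and \<phi> :: "nat \<Rightarrow> real \<Rightarrow> real"
    and \<beta>t :: "nat \<Rightarrow> 'w \<Rightarrow> real^'p"
    and \<eta>h :: "nat \<Rightarrow> 'z \<Rightarrow> 'w \<Rightarrow> 'h"
    and r :: "nat \<Rightarrow> real"
  assumes M: "prob_space M"
    and P0: "prob_space P0"
    and X_meas: "\<And>i. X i \<in> measurable M P0"
    and X_indep: "prob_space.indep_vars M (\<lambda>_. P0) X UNIV"
    and X_law: "\<And>i. distr M P0 (X i) = P0"
    and d_metric: "Metric_space H d"
    and \<eta>0: "\<eta>0 \<in> H"
    and m_meas: "\<And>\<beta> \<eta> \<zeta>. \<beta> \<in> B \<Longrightarrow> \<eta> \<in> H \<Longrightarrow> \<zeta> \<in> \<Xi> \<Longrightarrow> m \<beta> \<eta> \<zeta> \<in> borel_measurable P0"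
    and m_int1: "\<And>\<beta> \<eta> \<zeta>. \<beta> \<in> B \<Longrightarrow> \<eta> \<in> H \<Longrightarrow> \<zeta> \<in> \<Xi> \<Longrightarrow>
        integrable P0 (\<lambda>x. m \<beta> \<eta> \<zeta> x - m \<beta> \<eta>0 \<zeta> x)"
    and m_int2: "\<And>\<beta> \<eta> \<zeta>. \<beta> \<in> B \<Longrightarrow> \<eta> \<in> H \<Longrightarrow> \<zeta> \<in> \<Xi> \<Longrightarrow>
        integrable P0 (\<lambda>x. m \<beta> \<eta> \<zeta> x - m \<beta>0 \<eta>0 \<zeta> x)"
    and C_pos: "C1 > 0" "C2 > 0" "C3 > 0"
    and curv: "\<And>\<beta> \<eta> \<zeta>. \<beta> \<in> B \<Longrightarrow> \<eta> \<in> H \<Longrightarrow> \<zeta> \<in> \<Xi> \<Longrightarrow>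
        (\<integral>x. (m \<beta> \<eta> \<zeta> x - m \<beta> \<eta>0 \<zeta> x) \<partial>P0) \<le> - C1 * (d \<eta> \<eta>0)\<^sup>2 + C2 * (norm (\<beta> - \<beta>0))\<^sup>2"
    and modulus: "\<And>\<delta> n. \<delta> > 0 \<Longrightarrow> n \<ge> 1 \<Longrightarrow>
        enn2ereal (outer_exp M (\<lambda>\<omega>. SUP (\<beta>, \<eta>, \<zeta>) \<in> {(\<beta>, \<eta>, \<zeta>). \<beta> \<in> B \<and> \<eta> \<in> H \<and>
              norm (\<beta> - \<beta>0) < \<delta> \<and> d \<eta> \<eta>0 < \<delta> \<and> \<zeta> \<in> \<Xi>}.
            ennreal \<bar>emp_proc P0 X n (\<lambda>x. m \<beta> \<eta> \<zeta> x - m \<beta>0 \<eta>0 \<zeta> x) \<omega>\<bar>))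
        \<le> ereal (C3 * \<phi> n \<delta>)"
    and \<phi>_decr: "\<exists>a < 2. \<forall>n \<ge> 1. \<forall>\<delta>1 \<delta>2. 0 < \<delta>1 \<longrightarrow> \<delta>1 \<le> \<delta>2 \<longrightarrow>
        \<phi> n \<delta>2 / \<delta>2 powr a \<le> \<phi> n \<delta>1 / \<delta>1 powr a"
    and \<eta>h_ge: "\<And>n \<zeta> \<omega>. n \<ge> 1 \<Longrightarrow> \<zeta> \<in> \<Xi> \<Longrightarrow> \<omega> \<in> space M \<Longrightarrow>
        emp_meas X n (m (\<beta>t n \<omega>) (\<eta>h n \<zeta> \<omega>) \<zeta>) \<omega> \<ge> emp_meas X n (m (\<beta>t n \<omega>) \<eta>0 \<zeta>) \<omega>"
    and in_sets: "(\<lambda>n. outer_prob M {\<omega> \<in> space M. \<not> (\<beta>t n \<omega> \<in> B \<and> (\<forall>\<zeta>\<in>\<Xi>. \<eta>h n \<zeta> \<omega> \<in> H))})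
        \<longlonglongrightarrow> 0"
    and r_pos: "\<And>n. r n > 0"
    and r_rate: "\<And>n. n \<ge> 1 \<Longrightarrow> (r n)\<^sup>2 * \<phi> n (1 / r n) \<le> sqrt (real n)"
  shows "\<forall>\<epsilon> > 0. \<exists>K. \<forall>\<^sub>F n in sequentially.
    outer_prob M {\<omega> \<in> space M.
       (SUP \<zeta> \<in> \<Xi>. ereal (r n * d (\<eta>h n \<zeta> \<omega>) \<eta>0)) > ereal (K * (1 + r n * norm (\<beta>t n \<omega> - \<beta>0)))} \<le> \<epsilon>"
proof -
  obtain a where a: "a < 2" and decr: "\<forall>n \<ge> 1. \<forall>\<delta>1 \<delta>2. 0 < \<delta>1 \<longrightarrow> \<delta>1 \<le> \<delta>2 \<longrightarrow>
      \<phi> n \<delta>2 / \<delta>2 powr a \<le> \<phi> n \<delta>1 / \<delta>1 powr a"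
    using \<phi>_decr by blast
  have decr': "\<And>n \<delta>1 \<delta>2. n \<ge> 1 \<Longrightarrow> 0 < \<delta>1 \<Longrightarrow> \<delta>1 \<le> \<delta>2 \<Longrightarrow>
      \<phi> n \<delta>2 / \<delta>2 powr a \<le> \<phi> n \<delta>1 / \<delta>1 powr a"
    using decr by blast
  interpret peeling_setting M P0 X m B H \<Xi> d \<beta>0 \<eta>0 C1 C2 C3 \<phi> a \<beta>t \<eta>h r
    by (rule peeling_setting.intro[OF M d_metric \<eta>0 m_int2 C_pos curv modulus a decr' \<eta>h_ge r_pos r_rate])
  show ?thesis
    using rate_bound[OF in_sets[folded escape_event_def]] unfolding excess_event_def .
qed

end
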